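(* For every $\xi\in\mathbb{Z}^d$ with $\|\xi\|_1=1$, $$\lim_{r\searrow0}\mathbf P_r\bigl(\sigma_r(\xi)\le r^{-d/2}\psi_d(r)^{-1/2}\bigr)=0.$$
   Context: Frog model setting: $d\ge2$, $r\in(0,1]$, $\omega$ i.i.d. Bernoulli($r$) on $\mathbb{Z}^d$, independent simple random walks $(S^x_k)_{k\ge0}$ with $S^x_0=x$, independent of $\omega$; joint law $\mathbf P_r$; $\mathcal O:=\{x:\omega(x)=1\}$; $\mathcal R^A_n:=\bigcup_{x\in A}\{S^x_k:0\le k\le n\}$. $\phi_d(t):=t/\log t$ if $d=2$, $\phi_d(t):=t$ if $d\ge3$; $\delta_d(r):=\sqrt{|\log r|/r}$ if $d=2$, $1/\sqrt r$ if $d\ge3$. Let $\delta:=(50d)^{-d/2}$ and let $C\in(0,1)$ be a constant (depending only on $d$) such that for every $r\in(0,1]$, every integer $n\ge2$ and all finite $A,B\subset\mathbb{Z}^d$ with $\max\{\|x-y\|_2:x\in A,y\in B\}\le\sqrt n$ and $\#B\ge\delta n^{d/2}$, one has $\mathbf P_r(\#(\mathcal R^A_n\cap B\cap\mathcal O)<\frac r2\min\{C\phi_d(n)\#A,(1-\delta)\#B\})\le e^{-C\#A}+\exp\{-\frac r8\min\{C\phi_d(n)\#A,(1-\delta)\#B\}\}$ (such $C$ exists). Define $\psi_d(r):=2dC^{-1}\delta_d(r)^2$, $\nu_d(r):=100d\lceil\psi_d(r)\rceil$, and for $i\in\mathbb{N}_0$, $Q_{r,i}(\xi):=\{y\in\mathbb{Z}^d:\|y-3\lceil\psi_d(r)^{1/2}\rceil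 i\xi\|_\infty\le\lceil\psi_d(r)^{1/2}\rceil\}$. Set $\Gamma_{r,0}(\xi):=Q_{r,0}(\xi)\cap\mathcal O$ and $\Gamma_{r,i}(\xi):=\mathcal R^{\Gamma_{r,i-1}(\xi)}_{\nu_d(r)}\cap Q_{r,i}(\xi)\cap\mathcal O$ for $i\ge1$, and $\sigma_r(\xi):=\inf\{i\in\mathbb{N}_0:\#\Gamma_{r,i}(\xi)<2dC^{-1}|\log r|\}$. *)

theory Defs
  imports "HOL-Probability.Probability"
begin

text \<open>Frog model on the lattice Z^d, with d = CARD('d).
A sample point is a pair: the occupation configuration omega (True = occupied)
and, for every site x and time j, the j-th step of the walk started at x,
encoded as a pair (coordinate, sign).\<close>

type_synonym 'd frog_space = "((int^'d) \<Rightarrow> bool) \<times> ((int^'d) \<times> nat \<Rightarrow> 'd \<times> bool)"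

definition frogP :: "real \<Rightarrow> ('d::finite) frog_space measure" where
  "frogP r = pair_measure
     (PiM UNIV (\<lambda>_. measure_pmf (bernoulli_pmf r)))
     (PiM UNIV (\<lambda>_. measure_pmf (pmf_of_set (UNIV :: ('d \<times> bool) set))))"

definition unitstep :: "('d::finite) \<times> bool \<Rightarrow> int^'d" where
  "unitstep s = (\<chi> j. if j = fst s then (if snd s then 1 else -1) else 0)"

definition walk :: "('d::finite) frog_space \<Rightarrow> int^'d \<Rightarrow> nat \<Rightarrow> int^'d" where
  "walk w x k = x + (\<Sum>j<k. unitstep (snd w (x, j)))"

definition occupied :: "('d::finite) frog_space \<Rightarrow> (int^'d) set" where
  "occupied w = {x. fst w x}"

definition range_set :: "('d::finite) frog_space \<Rightarrow> (int^'d) set \<Rightarrow> nat \<Rightarrow> (int^'d) set" where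
  "range_set w A n = (\<Union>x\<in>A. {walk w x k | k. k \<le> n})"

definition linf :: "int^('d::finite) \<Rightarrow> int" where
  "linf z = Max (range (\<lambda>i. \<bar>z $ i\<bar>))"

definition lone :: "int^('d::finite) \<Rightarrow> int" where
  "lone z = (\<Sum>i\<in>UNIV. \<bar>z $ i\<bar>)"

definition ltwo :: "int^('d::finite) \<Rightarrow> real" where
  "ltwo z = sqrt (\<Sum>i\<in>UNIV. (real_of_int (z $ i))\<^sup>2)"

definition phi_d :: "nat \<Rightarrow> real \<Rightarrow> real" where
  "phi_d d t = (if d = 2 then t / ln t else t)"

definition delta_d :: "nat \<Rightarrow> real \<Rightarrow> real" where
  "delta_d d r = (if d = 2 then sqrt (\<bar>ln r\<bar> / r) else 1 / sqrt r)"

definition delta0 :: "nat \<Rightarrow> real" where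
  "delta0 d = (50 * real d) powr (- real d / 2)"

definition frog_const :: "'d::finite itself \<Rightarrow> real \<Rightarrow> bool" where
  "frog_const _ C \<longleftrightarrow> 0 < C \<and> C < 1 \<and>
    (\<forall>r n (A :: (int^'d) set) B.
       0 < r \<and> r \<le> 1 \<and> 2 \<le> n \<and> finite A \<and> finite B \<and>
       (\<forall>x\<in>A. \<forall>y\<in>B. ltwo (x - y) \<le> sqrt (real n)) \<and>
       real (card B) \<ge> delta0 CARD('d) * real n powr (real CARD('d) / 2) \<longrightarrow>
       (let m = min (C * phi_d CARD('d) (real n) * real (card A))
                    ((1 - delta0 CARD('d)) * real (card B)) in
        measure (frogP r :: 'd frog_space measure)
          {w \<in> space (frogP r). real (card (range_set w A n \<inter> B \<inter> occupied w)) < r / 2 * m}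
        \<le> exp (- C * real (card A)) + exp (- (r / 8) * m)))"

definition psi_d :: "real \<Rightarrow> nat \<Rightarrow> real \<Rightarrow> real" where
  "psi_d C d r = 2 * real d / C * (delta_d d r)\<^sup>2"

definition nu_d :: "real \<Rightarrow> nat \<Rightarrow> real \<Rightarrow> nat" where
  "nu_d C d r = 100 * d * nat \<lceil>psi_d C d r\<rceil>"

definition boxQ :: "real \<Rightarrow> real \<Rightarrow> int^('d::finite) \<Rightarrow> nat \<Rightarrow> (int^'d) set" where
  "boxQ C r \<xi> i = (let L = \<lceil>sqrt (psi_d C CARD('d) r)\<rceil> in
     {y. linf (y - (3 * L * int i) *s \<xi>) \<le> L})"

primrec Gamma :: "real \<Rightarrow> real \<Rightarrow> int^('d::finite) \<Rightarrow> 'd frog_space \<Rightarrow> nat \<Rightarrow> (int^'d) set" where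
  "Gamma C r \<xi> w 0 = boxQ C r \<xi> 0 \<inter> occupied w"
| "Gamma C r \<xi> w (Suc i) =
     range_set w (Gamma C r \<xi> w i) (nu_d C CARD('d) r) \<inter> boxQ C r \<xi> (Suc i) \<inter> occupied w"

definition sigma :: "real \<Rightarrow> real \<Rightarrow> int^('d::finite) \<Rightarrow> 'd frog_space \<Rightarrow> enat" where
  "sigma C r \<xi> w = (let P = (\<lambda>i. real (card (Gamma C r \<xi> w i)) < 2 * real CARD('d) / C * \<bar>ln r\<bar>)
     in if \<exists>i. P i then enat (LEAST i. P i) else \<infinity>)"

end

theory Submission
  imports Defs
begin

text \<open>
  Let T = 2 d |log r| / C and N = r^(-d/2) psi_d(r)^(-1/2). If sigma_r(xi) <= N, then
  #Gamma_i < T for some i <= N, so either #Gamma_0 < T or Gamma drops below T at some step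
  i <= N. The set Gamma_i is a function of the occupation variables in Q_0, ..., Q_i and of
  the first nu_d(r) steps of the walks started in Q_0, ..., Q_(i-1), whereas the number of
  occupied sites of Q_(i+1) visited by the walks from a fixed A in Q_i depends on disjoint
  coordinates. Hence, conditionally on Gamma_i = A with #A >= T, the estimate defining an
  admissible C (with n = nu_d(r) and B = Q_(i+1)) bounds the probability of a drop by
  beta = exp(-C T) + exp(-r m / 8), and beta <= 2 r^((d+1)/2) once r <= C / 1600.
  A union bound over i <= N bounds the probability in question by (N + 1) beta <= 4 sqrt r.
\<close>

section \<open>Events depending on finitely many coordinates of i.i.d. fields\<close>

abbreviation pmf_fields :: "'x pmf \<Rightarrow> 'y pmf \<Rightarrow> (('a \<Rightarrow> 'x) \<times> ('b \<Rightarrow> 'y)) measure" where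
  "pmf_fields p q \<equiv> PiM UNIV (\<lambda>_. measure_pmf p) \<Otimes>\<^sub>M PiM UNIV (\<lambda>_. measure_pmf q)"

definition cylinder :: "'i set \<Rightarrow> ('i \<Rightarrow> 'v) \<Rightarrow> ('i \<Rightarrow> 'v) set" where
  "cylinder S a = {f. \<forall>x\<in>S. f x = a x}"

lemma cylinder_eq_prod_emb:
  "cylinder S a = prod_emb UNIV (\<lambda>_. measure_pmf p) S (PiE S (\<lambda>x. {a x}))"
  by (auto simp: cylinder_def prod_emb_def space_PiM PiE_iff)

lemma cylinder_Int_cylinder:
  "S \<inter> T = {} \<Longrightarrow> cylinder S a \<inter> cylinder T b = cylinder (S \<union> T) (\<lambda>x. if x \<in> S then a x else b x)"
  unfolding cylinder_def by auto

lemma sets_cylinder: "finite S \<Longrightarrow> cylinder S a \<in> sets (PiM UNIV (\<lambda>_. measure_pmf p))"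
  unfolding cylinder_eq_prod_emb[where p = p] by (rule sets_PiM_I) auto

lemma emeasure_cylinder:
  assumes "finite S"
  shows "emeasure (PiM UNIV (\<lambda>_. measure_pmf p)) (cylinder S a) = ennreal (\<Prod>x\<in>S. pmf p (a x))"
proof -
  have "emeasure (PiM UNIV (\<lambda>_. measure_pmf p)) (cylinder S a) = (\<Prod>x\<in>S. emeasure (measure_pmf p) {a x})"
    unfolding cylinder_eq_prod_emb[where p = p]
    by (rule emeasure_PiM_emb) (auto simp: prob_space_measure_pmf assms)
  then show ?thesis by (simp add: emeasure_pmf_single prod_ennreal)
qed

lemma prob_space_PiM_pmf: "prob_space (PiM UNIV (\<lambda>_. measure_pmf p))"
  by (rule prob_space_PiM) (simp add: prob_space_measure_pmf)

lemma prob_space_pmf_fields: "prob_space (pmf_fields p q)"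
  by (intro prob_space_pair prob_space_PiM_pmf)

lemma space_pmf_fields [simp]: "space (pmf_fields p q) = UNIV"
  by (simp add: space_pair_measure space_PiM)

lemma measure_cylinder_Times:
  assumes "finite S" "finite P"
  shows "measure (pmf_fields p q) (cylinder S a \<times> cylinder P b) =
    (\<Prod>x\<in>S. pmf p (a x)) * (\<Prod>y\<in>P. pmf q (b y))"
proof -
  interpret sigma_finite_measure "PiM UNIV (\<lambda>_. measure_pmf q)"
    using prob_space_PiM_pmf by (rule prob_space_imp_sigma_finite)
  have "emeasure (pmf_fields p q) (cylinder S a \<times> cylinder P b) =
      ennreal (\<Prod>x\<in>S. pmf p (a x)) * ennreal (\<Prod>y\<in>P. pmf q (b y))"
    by (subst emeasure_pair_measure_Times) (auto intro!: sets_cylinder simp: emeasure_cylinder assms)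
  then show ?thesis
    by (simp add: measure_def ennreal_mult'[symmetric] prod_nonneg)
qed

definition restrict_fields :: "'a set \<Rightarrow> 'b set \<Rightarrow> ('a \<Rightarrow> 'x) \<times> ('b \<Rightarrow> 'y) \<Rightarrow> ('a \<Rightarrow> 'x) \<times> ('b \<Rightarrow> 'y)" where
  "restrict_fields S P w = (restrict (fst w) S, restrict (snd w) P)"

abbreviation fiber :: "'a set \<Rightarrow> 'b set \<Rightarrow> ('a \<Rightarrow> 'x) \<times> ('b \<Rightarrow> 'y) \<Rightarrow> (('a \<Rightarrow> 'x) \<times> ('b \<Rightarrow> 'y)) set" where
  "fiber S P u \<equiv> {w. restrict_fields S P w = u}"

definition determined_by :: "'a set \<Rightarrow> 'b set \<Rightarrow> (('a \<Rightarrow> 'x) \<times> ('b \<Rightarrow> 'y)) set \<Rightarrow> bool" where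
  "determined_by S P X \<longleftrightarrow>
     (\<forall>w w'. restrict_fields S P w = restrict_fields S P w' \<longrightarrow> (w \<in> X \<longleftrightarrow> w' \<in> X))"

lemma restrict_fields_eq_iff:
  "restrict_fields S P w = restrict_fields S P w' \<longleftrightarrow>
     (\<forall>x\<in>S. fst w x = fst w' x) \<and> (\<forall>y\<in>P. snd w y = snd w' y)"
  unfolding restrict_fields_def by (auto simp: restrict_def fun_eq_iff split: if_splits)

lemma fiber_eq_cylinder_Times:
  "fiber S P (restrict_fields S P w0) = cylinder S (fst w0) \<times> cylinder P (snd w0)"
  unfolding restrict_fields_eq_iff cylinder_def by auto

lemma finite_image_restrict_fields:
  assumes "finite S" "finite P"
  shows "finite (restrict_fields S P ` (X :: (('a \<Rightarrow> 'x::finite) \<times> ('b \<Rightarrow> 'y::finite)) set))"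
proof (rule finite_subset)
  show "restrict_fields S P ` X \<subseteq> PiE S (\<lambda>_. UNIV) \<times> PiE P (\<lambda>_. UNIV)"
    by (auto simp: restrict_fields_def)
  show "finite (PiE S (\<lambda>_. UNIV :: 'x set) \<times> PiE P (\<lambda>_. UNIV :: 'y set))"
    using assms by (intro finite_cartesian_product finite_PiE) auto
qed

lemma determined_by_eq_UN_fibers:
  "determined_by S P X \<Longrightarrow> X = (\<Union>u\<in>restrict_fields S P ` X. fiber S P u)"
  unfolding determined_by_def by blast

lemma Int_determined_by_eq_UN_fibers:
  assumes "determined_by S1 P1 X" "determined_by S2 P2 Y"
  shows "X \<inter> Y =
    (\<Union>uv\<in>restrict_fields S1 P1 ` X \<times> restrict_fields S2 P2 ` Y. fiber S1 P1 (fst uv) \<inter> fiber S2 P2 (snd uv))"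
proof (intro equalityI subsetI)
  fix w assume "w \<in> X \<inter> Y"
  then show "w \<in> (\<Union>uv\<in>restrict_fields S1 P1 ` X \<times> restrict_fields S2 P2 ` Y. fiber S1 P1 (fst uv) \<inter> fiber S2 P2 (snd uv))"
    by (intro UN_I[of "(restrict_fields S1 P1 w, restrict_fields S2 P2 w)"]) auto
next
  fix w assume "w \<in> (\<Union>uv\<in>restrict_fields S1 P1 ` X \<times> restrict_fields S2 P2 ` Y. fiber S1 P1 (fst uv) \<inter> fiber S2 P2 (snd uv))"
  then obtain x y where "x \<in> X" "y \<in> Y"
    "restrict_fields S1 P1 w = restrict_fields S1 P1 x" "restrict_fields S2 P2 w = restrict_fields S2 P2 y"
    by auto
  then show "w \<in> X \<inter> Y" using assms unfolding determined_by_def by blast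
qed

context
  fixes p :: "'x::finite pmf" and q :: "'y::finite pmf"
begin

lemma sets_fiber: "finite S \<Longrightarrow> finite P \<Longrightarrow> fiber S P (restrict_fields S P w0) \<in> sets (pmf_fields p q)"
  unfolding fiber_eq_cylinder_Times by (intro pair_measureI sets_cylinder)

lemma
  fixes X :: "(('a \<Rightarrow> 'x) \<times> ('b \<Rightarrow> 'y)) set"
  assumes "finite S" "finite P" "determined_by S P X"
  shows sets_determined_by: "X \<in> sets (pmf_fields p q)"
    and measure_determined_by:
      "measure (pmf_fields p q) X = (\<Sum>u\<in>restrict_fields S P ` X. measure (pmf_fields p q) (fiber S P u))"
proof -
  interpret prob_space "pmf_fields p q :: (('a \<Rightarrow> 'x) \<times> ('b \<Rightarrow> 'y)) measure"
    by (rule prob_space_pmf_fields)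
  note fin = finite_image_restrict_fields[OF assms(1,2), of X]
  have sets: "fiber S P ` restrict_fields S P ` X \<subseteq> sets (pmf_fields p q)"
    using sets_fiber[OF assms(1,2)] by auto
  note X = determined_by_eq_UN_fibers[OF assms(3), symmetric]
  have "(\<Union>u\<in>restrict_fields S P ` X. fiber S P u) \<in> sets (pmf_fields p q)"
    using fin sets by (intro sets.finite_UN) auto
  then show "X \<in> sets (pmf_fields p q)"
    by (simp only: X)
  have "measure (pmf_fields p q) (\<Union>u\<in>restrict_fields S P ` X. fiber S P u) =
      (\<Sum>u\<in>restrict_fields S P ` X. measure (pmf_fields p q) (fiber S P u))"
    by (rule measure_finite_Union[OF fin sets]) (auto simp: disjoint_family_on_def)
  then show "measure (pmf_fields p q) X = (\<Sum>u\<in>restrict_fields S P ` X. measure (pmf_fields p q) (fiber S P u))"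
    by (simp only: X)
qed

lemma measure_fiber_Int_fiber:
  assumes "finite S1" "finite P1" "finite S2" "finite P2" "S1 \<inter> S2 = {}" "P1 \<inter> P2 = {}"
  shows "measure (pmf_fields p q) (fiber S1 P1 (restrict_fields S1 P1 w1) \<inter> fiber S2 P2 (restrict_fields S2 P2 w2)) =
    measure (pmf_fields p q) (fiber S1 P1 (restrict_fields S1 P1 w1)) *
    measure (pmf_fields p q) (fiber S2 P2 (restrict_fields S2 P2 w2))"
proof -
  let ?a = "\<lambda>x. if x \<in> S1 then fst w1 x else fst w2 x" and ?b = "\<lambda>y. if y \<in> P1 then snd w1 y else snd w2 y"
  have "measure (pmf_fields p q) (fiber S1 P1 (restrict_fields S1 P1 w1) \<inter> fiber S2 P2 (restrict_fields S2 P2 w2)) =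
      measure (pmf_fields p q) (cylinder (S1 \<union> S2) ?a \<times> cylinder (P1 \<union> P2) ?b)"
    unfolding fiber_eq_cylinder_Times using assms(5,6)
    by (intro arg_cong[where f = "measure _"]) (auto simp: cylinder_Int_cylinder[symmetric])
  also have "\<dots> = (\<Prod>x\<in>S1 \<union> S2. pmf p (?a x)) * (\<Prod>y\<in>P1 \<union> P2. pmf q (?b y))"
    using assms by (intro measure_cylinder_Times) auto
  also have "(\<Prod>x\<in>S1 \<union> S2. pmf p (?a x)) = (\<Prod>x\<in>S1. pmf p (fst w1 x)) * (\<Prod>x\<in>S2. pmf p (fst w2 x))"
    using assms by (subst prod.union_disjoint) (auto intro!: arg_cong2[where f = "(*)"] prod.cong)
  also have "(\<Prod>y\<in>P1 \<union> P2. pmf q (?b y)) = (\<Prod>y\<in>P1. pmf q (snd w1 y)) * (\<Prod>y\<in>P2. pmf q (snd w2 y))"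
    using assms by (subst prod.union_disjoint) (auto intro!: arg_cong2[where f = "(*)"] prod.cong)
  finally show ?thesis
    using assms by (simp add: fiber_eq_cylinder_Times measure_cylinder_Times)
qed

lemma measure_Int_determined_by:
  fixes X Y :: "(('a \<Rightarrow> 'x) \<times> ('b \<Rightarrow> 'y)) set"
  assumes fin: "finite S1" "finite P1" "finite S2" "finite P2"
    and disj: "S1 \<inter> S2 = {}" "P1 \<inter> P2 = {}"
    and X: "determined_by S1 P1 X" and Y: "determined_by S2 P2 Y"
  shows "measure (pmf_fields p q) (X \<inter> Y) = measure (pmf_fields p q) X * measure (pmf_fields p q) Y"
proof -
  interpret prob_space "pmf_fields p q :: (('a \<Rightarrow> 'x) \<times> ('b \<Rightarrow> 'y)) measure"
    by (rule prob_space_pmf_fields)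
  let ?UV = "restrict_fields S1 P1 ` X \<times> restrict_fields S2 P2 ` Y"
  let ?F = "\<lambda>uv. fiber S1 P1 (fst uv) \<inter> fiber S2 P2 (snd uv)"
  have "finite ?UV"
    using finite_image_restrict_fields[OF fin(1,2)] finite_image_restrict_fields[OF fin(3,4)] by blast
  then have "measure (pmf_fields p q) (X \<inter> Y) = (\<Sum>uv\<in>?UV. measure (pmf_fields p q) (?F uv))"
    unfolding Int_determined_by_eq_UN_fibers[OF X Y]
    by (rule measure_finite_Union) (auto simp: disjoint_family_on_def intro!: sets.Int sets_fiber fin)
  also have "\<dots> = (\<Sum>uv\<in>?UV. measure (pmf_fields p q) (fiber S1 P1 (fst uv)) * measure (pmf_fields p q) (fiber S2 P2 (snd uv)))"
    using measure_fiber_Int_fiber[OF fin disj] by (intro sum.cong refl) auto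
  also have "\<dots> = measure (pmf_fields p q) X * measure (pmf_fields p q) Y"
    by (simp add: measure_determined_by[OF fin(1,2) X] measure_determined_by[OF fin(3,4) Y]
        sum_product sum.cartesian_product case_prod_beta)
  finally show ?thesis .
qed

end

section \<open>Numerical estimates for small density\<close>

definition box_radius :: "real \<Rightarrow> nat \<Rightarrow> real \<Rightarrow> int" where
  "box_radius C d r = \<lceil>sqrt (psi_d C d r)\<rceil>"

definition box_size :: "real \<Rightarrow> nat \<Rightarrow> real \<Rightarrow> real" where
  "box_size C d r = real (nat (2 * box_radius C d r + 1) ^ d)"

text \<open>The level 2 d |log r| / C in the definition of \<^const>\<open>sigma\<close>.\<close>

definition gamma_threshold :: "real \<Rightarrow> nat \<Rightarrow> real \<Rightarrow> real" where
  "gamma_threshold C d r = 2 * real d / C * \<bar>ln r\<bar>"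

text \<open>The quantity \<open>m\<close> in the definition of \<^const>\<open>frog_const\<close>.\<close>

definition frog_mean :: "real \<Rightarrow> nat \<Rightarrow> real \<Rightarrow> real \<Rightarrow> real \<Rightarrow> real" where
  "frog_mean C d n a b = min (C * phi_d d n * a) ((1 - delta0 d) * b)"

text \<open>The bound of \<^const>\<open>frog_const\<close> for #A = T and #B = #Q_i: it controls the
  probability that Gamma drops below the threshold T in one step.\<close>

definition step_failure_bound :: "real \<Rightarrow> nat \<Rightarrow> real \<Rightarrow> real" where
  "step_failure_bound C d r =
     exp (- C * gamma_threshold C d r) +
     exp (- (r / 8) * frog_mean C d (real (nu_d C d r)) (gamma_threshold C d r) (box_size C d r))"

lemma delta0_le: "2 \<le> d \<Longrightarrow> delta0 d \<le> 1 / 100"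
proof -
  assume d: "2 \<le> d"
  have "(50 * real d) powr (- real d / 2) \<le> (50 * real d) powr (-1)"
    by (rule powr_mono) (use d in auto)
  also have "\<dots> \<le> 1 / 100" using d by (simp add: powr_minus_divide field_simps)
  finally show ?thesis unfolding delta0_def .
qed

locale small_density =
  fixes C r :: real and d :: nat
  assumes d: "2 \<le> d" and C: "0 < C" "C < 1" and r: "0 < r" "r \<le> C / 1600"
begin

lemma r_lt_1: "r < 1"
  using r C by simp

lemma abs_ln_small: "\<bar>ln r\<bar> = - ln r" "1 \<le> \<bar>ln r\<bar>"
proof -
  have "r * exp 1 \<le> r * 3" using r exp_le by (intro mult_left_mono) auto
  then have "r * exp 1 \<le> 1" using r C by linarith
  then have "r \<le> 1 / exp 1" by (simp add: field_simps)
  then have "ln r \<le> ln (exp (-1))" using r by (simp add: exp_minus inverse_eq_divide)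
  then have "ln r \<le> -1" by simp
  then show "\<bar>ln r\<bar> = - ln r" "1 \<le> \<bar>ln r\<bar>" by auto
qed

lemma abs_ln_le_inverse: "\<bar>ln r\<bar> \<le> 1 / r"
  using ln_le_minus_one[of "1 / r"] r abs_ln_small by (simp add: ln_div)

lemma half_abs_ln_le_inverse_sqrt: "\<bar>ln r\<bar> / 2 \<le> 1 / sqrt r"
  using ln_le_minus_one[of "1 / sqrt r"] r abs_ln_small by (simp add: ln_div ln_sqrt)

lemma r_C_psi: "r * C * psi_d C d r = (if d = 2 then 4 * \<bar>ln r\<bar> else 2 * real d)"
proof -
  have "(delta_d d r)\<^sup>2 = (if d = 2 then \<bar>ln r\<bar> / r else 1 / r)"
    using r by (simp add: delta_d_def power_divide)
  then show ?thesis using r C by (simp add: psi_d_def)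
qed

lemma psi_ge_1: "1 \<le> psi_d C d r"
proof -
  have "1 \<le> r * C * psi_d C d r"
    using r_C_psi abs_ln_small d by simp
  moreover have "r * C * psi_d C d r \<le> psi_d C d r"
    using r_lt_1 r C by (intro mult_left_le_one_le) (auto simp: psi_d_def mult_le_one)
  ultimately show ?thesis by linarith
qed

lemma box_size_ge: "(2 * sqrt (psi_d C d r)) ^ d \<le> box_size C d r"
proof -
  have L: "sqrt (psi_d C d r) \<le> real_of_int (box_radius C d r)" "1 \<le> sqrt (psi_d C d r)"
    using psi_ge_1 by (auto simp: box_radius_def)
  then have "0 \<le> 2 * box_radius C d r + 1" by linarith
  then have "box_size C d r = (2 * real_of_int (box_radius C d r) + 1) ^ d"
    by (simp add: box_size_def)
  moreover have "(2 * sqrt (psi_d C d r)) ^ d \<le> (2 * real_of_int (box_radius C d r) + 1) ^ d"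
    using L by (intro power_mono) auto
  ultimately show ?thesis by simp
qed

lemma nu_bounds: "100 * real d * psi_d C d r \<le> real (nu_d C d r)" "real (nu_d C d r) \<le> 200 * real d * psi_d C d r"
proof -
  have nu: "real (nu_d C d r) = 100 * real d * real_of_int \<lceil>psi_d C d r\<rceil>"
    using psi_ge_1 by (simp add: nu_d_def)
  have "psi_d C d r \<le> real_of_int \<lceil>psi_d C d r\<rceil>" "real_of_int \<lceil>psi_d C d r\<rceil> \<le> 2 * psi_d C d r"
    using psi_ge_1 by linarith+
  then have "100 * real d * psi_d C d r \<le> 100 * real d * real_of_int \<lceil>psi_d C d r\<rceil>"
    "100 * real d * real_of_int \<lceil>psi_d C d r\<rceil> \<le> 100 * real d * (2 * psi_d C d r)"
    by (intro mult_left_mono; simp)+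
  then show "100 * real d * psi_d C d r \<le> real (nu_d C d r)" "real (nu_d C d r) \<le> 200 * real d * psi_d C d r"
    unfolding nu by simp_all
qed

lemma nu_ge_200: "200 \<le> real (nu_d C d r)"
proof -
  have "2 * 1 \<le> real d * psi_d C d r" using d psi_ge_1 by (intro mult_mono) auto
  then show ?thesis using nu_bounds(1) by linarith
qed

lemma density_le_box_size: "delta0 d * real (nu_d C d r) powr (real d / 2) \<le> box_size C d r"
proof -
  let ?p = "psi_d C d r"
  have "real (nu_d C d r) / (50 * real d) \<le> 4 * ?p"
    using nu_bounds(2) d by (simp add: field_simps)
  then have "delta0 d * real (nu_d C d r) powr (real d / 2) \<le> (4 * ?p) powr (real d / 2)"
    using d by (simp add: delta0_def powr_minus_divide powr_divide[symmetric] powr_mono2)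
  also have "(4 * ?p) powr (real d / 2) = (2 * sqrt ?p) ^ d"
  proof -
    have pos: "0 < 2 * sqrt ?p" using psi_ge_1 by simp
    have "4 * ?p = (2 * sqrt ?p) powr 2"
      using psi_ge_1 pos by (simp add: power_mult_distrib powr_numeral)
    then have "(4 * ?p) powr (real d / 2) = (2 * sqrt ?p) powr (2 * (real d / 2))"
      by (simp add: powr_powr)
    then show ?thesis using pos by (simp add: powr_realpow)
  qed
  finally show ?thesis using box_size_ge by linarith
qed

lemma r_C_phi_nu_ge_3: "3 \<le> r * C * phi_d d (real (nu_d C d r))"
proof (cases "d = 2")
  case True
  let ?n = "real (nu_d C d r)"
  have "r * C * (100 * real d * psi_d C d r) \<le> r * C * ?n"
    using r C by (intro mult_left_mono[OF nu_bounds(1)]) simp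
  moreover have "r * C * (100 * real d * psi_d C d r) = 100 * real d * (r * C * psi_d C d r)"
    by (simp only: ac_simps)
  ultimately have rCn: "800 * \<bar>ln r\<bar> \<le> r * C * ?n"
    using r_C_psi True by simp
  have "psi_d C d r = 4 * \<bar>ln r\<bar> / (r * C)"
    using r_C_psi True r C by (simp add: field_simps)
  then have "?n \<le> 1600 * \<bar>ln r\<bar> / (r * C)"
    using nu_bounds(2) True by simp
  also have "\<dots> = (1600 / C) * \<bar>ln r\<bar> * (1 / r)" by simp
  also have "\<dots> \<le> (1 / r) * (1 / r) * (1 / r)"
  proof -
    have "1600 / C \<le> 1 / r" using r C by (simp add: field_simps)
    then show ?thesis using abs_ln_le_inverse r C by (intro mult_mono) auto
  qed
  finally have "ln ?n \<le> ln ((1 / r) * (1 / r) * (1 / r))"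
    \<comment> \<open>the constant 1600 of \<^locale>\<open>small_density\<close> is chosen for this step\<close>
    using nu_ge_200 r by simp
  also have "\<dots> = 3 * \<bar>ln r\<bar>"
    using r abs_ln_small by (simp add: ln_mult ln_div)
  moreover have "0 < ln ?n" using nu_ge_200 by simp
  ultimately have "3 * ln ?n \<le> r * C * ?n" using rCn abs_ln_small by linarith
  then show ?thesis using True \<open>0 < ln ?n\<close> by (simp add: phi_d_def le_divide_eq)
next
  case False
  have "1 * 1 \<le> real d * real d" using d by (intro mult_mono) auto
  then have "3 \<le> 100 * real d * (2 * real d)" by simp
  also have "\<dots> = r * C * (100 * real d * psi_d C d r)"
    using r_C_psi False by (simp only: ac_simps) simp
  also have "\<dots> \<le> r * C * real (nu_d C d r)"
    using r C by (intro mult_left_mono[OF nu_bounds(1)]) simp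
  finally show ?thesis using False by (simp add: phi_d_def)
qed

lemma r_box_size_ge: "8 * real d * \<bar>ln r\<bar> / C \<le> r * box_size C d r"
proof -
  let ?p = "psi_d C d r"
  have Q: "4 * ?p * (2 * sqrt ?p) ^ (d - 2) \<le> box_size C d r"
  proof -
    have "d = 2 + (d - 2)" using d by simp
    then have "(2 * sqrt ?p) ^ d = (2 * sqrt ?p) ^ 2 * (2 * sqrt ?p) ^ (d - 2)"
      by (metis power_add)
    also have "(2 * sqrt ?p) ^ 2 = 4 * ?p" using psi_ge_1 by (simp add: power_mult_distrib)
    finally show ?thesis using box_size_ge by simp
  qed
  show ?thesis
  proof (cases "d = 2")
    case True
    then have "8 * real d * \<bar>ln r\<bar> / C = r * (4 * ?p)"
      using r_C_psi C by (simp add: field_simps)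
    also have "\<dots> \<le> r * box_size C d r"
      using Q True r by (intro mult_left_mono) auto
    finally show ?thesis .
  next
    case False
    have rp: "r * ?p = 2 * real d / C" using r_C_psi False C by (simp add: field_simps)
    have "1 \<le> 2 * real d / C" using d C by (simp add: le_divide_eq)
    then have "1 / r \<le> ?p" using rp r by (simp add: divide_le_eq mult.commute)
    then have "sqrt (1 / r) \<le> sqrt ?p" by (rule real_sqrt_le_mono)
    then have "1 / sqrt r \<le> sqrt ?p" by (simp add: real_sqrt_divide)
    then have "\<bar>ln r\<bar> / 2 \<le> sqrt ?p" using half_abs_ln_le_inverse_sqrt by linarith
    then have "8 * (2 * real d / C) * (\<bar>ln r\<bar> / 2) \<le> 8 * (2 * real d / C) * sqrt ?p"
      using C by (intro mult_left_mono) auto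
    then have "8 * real d * \<bar>ln r\<bar> / C \<le> 8 * (r * ?p) * sqrt ?p"
      unfolding rp by simp
    also have "\<dots> \<le> r * (4 * ?p * (2 * sqrt ?p) ^ (d - 2))"
    proof -
      have "1 \<le> sqrt ?p" using psi_ge_1 by simp
      then have "1 \<le> 2 * sqrt ?p" by linarith
      from self_le_power[OF this] have "2 * sqrt ?p \<le> (2 * sqrt ?p) ^ (d - 2)"
        using False d by simp
      then show ?thesis using r psi_ge_1 by (simp add: mult_left_mono)
    qed
    also have "\<dots> \<le> r * box_size C d r" using Q r by (simp add: mult_left_mono)
    finally show ?thesis .
  qed
qed

lemma three_threshold_le_r_box_size: "3 * gamma_threshold C d r \<le> r * ((1 - delta0 d) * box_size C d r)"
proof -
  let ?X = "real d * \<bar>ln r\<bar> / C"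
  have "3 * gamma_threshold C d r = 6 * ?X" by (simp add: gamma_threshold_def)
  also have "\<dots> \<le> (8 * (1 - delta0 d)) * ?X"
    using delta0_le[OF d] C by (intro mult_right_mono) auto
  also have "\<dots> = (1 - delta0 d) * (8 * real d * \<bar>ln r\<bar> / C)" by simp
  also have "\<dots> \<le> (1 - delta0 d) * (r * box_size C d r)"
    using delta0_le[OF d] r_box_size_ge by (intro mult_left_mono) auto
  finally show ?thesis by (simp add: algebra_simps)
qed

lemma phi_nu_nonneg: "0 \<le> phi_d d (real (nu_d C d r))"
proof -
  have "0 < r * C * phi_d d (real (nu_d C d r))" using r_C_phi_nu_ge_3 by linarith
  moreover have "0 < r * C" using r C by simp
  ultimately show ?thesis by (metis zero_less_mult_pos less_imp_le)
qed

lemma gamma_threshold_nonneg: "0 \<le> gamma_threshold C d r"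
  using C by (simp add: gamma_threshold_def)

lemma frog_mean_mono: "a \<le> a' \<Longrightarrow> frog_mean C d (real (nu_d C d r)) a b \<le> frog_mean C d (real (nu_d C d r)) a' b"
  unfolding frog_mean_def using phi_nu_nonneg C by (intro min.mono mult_left_mono order_refl) auto

lemma three_threshold_le_r_frog_mean:
  "3 * gamma_threshold C d r \<le> r * frog_mean C d (real (nu_d C d r)) (gamma_threshold C d r) (box_size C d r)"
proof -
  have "3 * gamma_threshold C d r \<le> (r * C * phi_d d (real (nu_d C d r))) * gamma_threshold C d r"
    using r_C_phi_nu_ge_3 gamma_threshold_nonneg by (intro mult_right_mono) auto
  then show ?thesis
    using three_threshold_le_r_box_size r by (simp add: frog_mean_def min_mult_distrib_left ac_simps)
qed

lemma gamma_threshold_le_half_r_frog_mean: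
  "gamma_threshold C d r \<le> r / 2 * frog_mean C d (real (nu_d C d r)) (gamma_threshold C d r) (box_size C d r)"
  using three_threshold_le_r_frog_mean gamma_threshold_nonneg by simp

lemma gamma_threshold_le_box_size: "gamma_threshold C d r \<le> box_size C d r"
proof -
  have "0 \<le> delta0 d" by (simp add: delta0_def)
  then have "r * (1 - delta0 d) \<le> 1" using r_lt_1 r delta0_le[OF d] by (intro mult_le_one) auto
  then have "(r * (1 - delta0 d)) * box_size C d r \<le> 1 * box_size C d r"
    by (intro mult_right_mono) (simp_all add: box_size_def)
  then have "r * ((1 - delta0 d) * box_size C d r) \<le> box_size C d r" by simp
  then show ?thesis using three_threshold_le_r_box_size gamma_threshold_nonneg by linarith
qed

lemma step_failure_bound_le: "step_failure_bound C d r \<le> 2 * r powr ((real d + 1) / 2)"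
proof -
  let ?T = "gamma_threshold C d r"
  have "exp (- C * ?T) = r powr (2 * real d)"
    using C r abs_ln_small by (simp add: gamma_threshold_def powr_def)
  also have "\<dots> \<le> r powr ((real d + 1) / 2)"
    using r r_lt_1 d by (intro powr_mono') auto
  finally have first: "exp (- C * ?T) \<le> r powr ((real d + 1) / 2)" .
  have "(real d + 1) / 2 * \<bar>ln r\<bar> \<le> 3 / 8 * ?T"
  proof -
    have "(real d + 1) / 2 * \<bar>ln r\<bar> \<le> 3 / 4 * real d * \<bar>ln r\<bar>"
      using d by (intro mult_right_mono) auto
    also have "\<dots> \<le> 3 / 4 * real d * \<bar>ln r\<bar> / C"
    proof -
      have "3 / 4 * real d * \<bar>ln r\<bar> * C \<le> 3 / 4 * real d * \<bar>ln r\<bar>"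
        using C by (intro mult_left_le) auto
      then show ?thesis using C by (simp add: le_divide_eq)
    qed
    finally show ?thesis by (simp add: gamma_threshold_def)
  qed
  moreover have "(real d + 1) / 2 * ln r = - ((real d + 1) / 2 * \<bar>ln r\<bar>)"
    using abs_ln_small by simp
  moreover have "- (r / 8) * frog_mean C d (real (nu_d C d r)) ?T (box_size C d r) =
      - (r * frog_mean C d (real (nu_d C d r)) ?T (box_size C d r)) / 8"
    by simp
  ultimately have "- (r / 8) * frog_mean C d (real (nu_d C d r)) ?T (box_size C d r) \<le> (real d + 1) / 2 * ln r"
    using three_threshold_le_r_frog_mean by linarith
  then have "exp (- (r / 8) * frog_mean C d (real (nu_d C d r)) ?T (box_size C d r)) \<le> r powr ((real d + 1) / 2)"
    using r by (simp add: powr_def)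
  with first show ?thesis by (simp add: step_failure_bound_def)
qed

lemma steps_times_step_failure_bound_le:
  "real (Suc (nat \<lfloor>r powr (- real d / 2) * psi_d C d r powr (- 1 / 2)\<rfloor>)) * step_failure_bound C d r \<le> 4 * sqrt r"
proof -
  let ?R = "r powr (- real d / 2)"
  let ?N = "?R * psi_d C d r powr (- 1 / 2)"
  have "1 \<le> ?R" using r r_lt_1 by (simp add: powr_minus_divide powr_le1)
  have "psi_d C d r powr (- 1 / 2) \<le> 1"
    using psi_ge_1 by (simp add: powr_minus_divide ge_one_powr_ge_zero)
  then have "?N \<le> ?R" using \<open>1 \<le> ?R\<close> by (simp add: mult_left_le)
  then have "real (Suc (nat \<lfloor>?N\<rfloor>)) \<le> 2 * ?R"
    using \<open>1 \<le> ?R\<close> by linarith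
  moreover have "0 \<le> step_failure_bound C d r" by (simp add: step_failure_bound_def)
  ultimately have "real (Suc (nat \<lfloor>?N\<rfloor>)) * step_failure_bound C d r \<le> 2 * ?R * (2 * r powr ((real d + 1) / 2))"
    using step_failure_bound_le by (intro mult_mono) auto
  also have "\<dots> = 4 * r powr (1 / 2)"
    by (simp add: powr_add[symmetric] field_simps)
  finally show ?thesis using r by (simp add: powr_half_sqrt)
qed

end

section \<open>The boxes Q_i\<close>

lemma linf_le_iff: "linf z \<le> L \<longleftrightarrow> (\<forall>k. \<bar>z $ k\<bar> \<le> L)"
  unfolding linf_def by (subst Max_le_iff) auto

lemma abs_nth_le_lone: "\<bar>\<xi> $ k\<bar> \<le> lone \<xi>"
  unfolding lone_def by (rule member_le_sum) auto

lemma ex_abs_nth_eq_1_if_lone_eq_1: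
  assumes "lone \<xi> = 1"
  obtains c where "\<bar>\<xi> $ c\<bar> = 1"
proof -
  have "\<exists>c. \<xi> $ c \<noteq> 0"
  proof (rule ccontr)
    assume "\<nexists>c. \<xi> $ c \<noteq> 0"
    then have "lone \<xi> = 0" by (simp add: lone_def)
    with assms show False by simp
  qed
  then obtain c where "\<xi> $ c \<noteq> 0" ..
  with abs_nth_le_lone[of \<xi> c] assms have "\<bar>\<xi> $ c\<bar> = 1" by linarith
  then show thesis by (rule that)
qed

lemma mem_boxQ_iff:
  "y \<in> boxQ C r \<xi> i \<longleftrightarrow>
    (\<forall>k. \<bar>y $ k - 3 * box_radius C CARD('d) r * int i * \<xi> $ k\<bar> \<le> box_radius C CARD('d) r)"
  for y :: "int^'d::finite"
  unfolding boxQ_def Let_def box_radius_def by (simp add: linf_le_iff mult.assoc)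

lemma boxQ_eq_image:
  fixes C r :: real and \<xi> :: "int^'d::finite"
  defines "L \<equiv> box_radius C CARD('d) r"
  shows "boxQ C r \<xi> i = (\<lambda>f. vec_lambda f + (3 * L * int i) *s \<xi>) ` PiE UNIV (\<lambda>_. {-L..L})"
proof (intro equalityI subsetI)
  fix y assume "y \<in> boxQ C r \<xi> i"
  then have bound: "\<bar>y $ k - 3 * L * int i * \<xi> $ k\<bar> \<le> L" for k
    unfolding mem_boxQ_iff L_def by blast
  have "y $ k - 3 * L * int i * \<xi> $ k \<in> {-L..L}" for k
    using abs_le_D1[OF bound[of k]] abs_le_D2[OF bound[of k]] by auto
  then have "(\<lambda>k. y $ k - 3 * L * int i * \<xi> $ k) \<in> PiE UNIV (\<lambda>_. {-L..L})"
    by (simp add: PiE_iff)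
  moreover have "y = vec_lambda (\<lambda>k. y $ k - 3 * L * int i * \<xi> $ k) + (3 * L * int i) *s \<xi>"
    by (simp add: vec_eq_iff)
  ultimately show "y \<in> (\<lambda>f. vec_lambda f + (3 * L * int i) *s \<xi>) ` PiE UNIV (\<lambda>_. {-L..L})"
    by (intro image_eqI)
next
  fix y assume "y \<in> (\<lambda>f. vec_lambda f + (3 * L * int i) *s \<xi>) ` PiE UNIV (\<lambda>_. {-L..L})"
  then obtain f where f: "f \<in> PiE UNIV (\<lambda>_. {-L..L})" and y: "y = vec_lambda f + (3 * L * int i) *s \<xi>"
    by blast
  have "\<bar>y $ k - 3 * L * int i * \<xi> $ k\<bar> \<le> L" for k
  proof -
    have "f k \<in> {-L..L}" using f by (rule PiE_mem) simp
    then show ?thesis by (simp add: y abs_le_iff)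
  qed
  then show "y \<in> boxQ C r \<xi> i"
    unfolding mem_boxQ_iff L_def by blast
qed

lemma finite_boxQ: "finite (boxQ C r (\<xi> :: int^'d::finite) i)"
  unfolding boxQ_eq_image by (intro finite_imageI finite_PiE) simp_all

lemma card_boxQ: "real (card (boxQ C r (\<xi> :: int^'d::finite) i)) = box_size C CARD('d) r"
proof -
  let ?L = "box_radius C CARD('d) r"
  have "card (boxQ C r \<xi> i) = card (PiE UNIV (\<lambda>_::'d. {-?L..?L}))"
    unfolding boxQ_eq_image by (rule card_image) (simp add: inj_on_def)
  also have "\<dots> = nat (2 * ?L + 1) ^ CARD('d)"
    by (simp add: card_PiE)
  finally show ?thesis by (simp add: box_size_def)
qed

lemma boxQ_disjoint:
  fixes \<xi> :: "int^'d::finite"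
  assumes "lone \<xi> = 1" "0 < psi_d C CARD('d) r" "i \<noteq> j"
  shows "boxQ C r \<xi> i \<inter> boxQ C r \<xi> j = {}"
proof (rule ccontr)
  let ?L = "box_radius C CARD('d) r"
  have L: "1 \<le> ?L" using assms(2) by (simp add: box_radius_def)
  obtain c where c: "\<bar>\<xi> $ c\<bar> = 1" using ex_abs_nth_eq_1_if_lone_eq_1[OF assms(1)] .
  assume "boxQ C r \<xi> i \<inter> boxQ C r \<xi> j \<noteq> {}"
  then obtain y where "y \<in> boxQ C r \<xi> i" "y \<in> boxQ C r \<xi> j" by blast
  then have "\<bar>y $ c - 3 * ?L * int i * \<xi> $ c\<bar> \<le> ?L" "\<bar>y $ c - 3 * ?L * int j * \<xi> $ c\<bar> \<le> ?L"
    unfolding mem_boxQ_iff by blast+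
  then have "\<bar>3 * ?L * (int i - int j) * \<xi> $ c\<bar> \<le> 2 * ?L"
    by (simp add: algebra_simps abs_le_iff)
  also have "\<bar>3 * ?L * (int i - int j) * \<xi> $ c\<bar> = 3 * ?L * \<bar>int i - int j\<bar>"
    using L c by (simp add: abs_mult)
  finally have "3 * ?L * \<bar>int i - int j\<bar> \<le> 2 * ?L" .
  moreover have "3 * ?L * 1 \<le> 3 * ?L * \<bar>int i - int j\<bar>"
    using L assms(3) by (intro mult_left_mono) auto
  ultimately show False using L by linarith
qed

lemma boxQ_dist:
  fixes \<xi> :: "int^'d::finite"
  assumes "lone \<xi> = 1" "1 \<le> psi_d C CARD('d) r" "j = i \<or> j = Suc i"
    and "x \<in> boxQ C r \<xi> i" "y \<in> boxQ C r \<xi> j"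
  shows "ltwo (x - y) \<le> sqrt (real (nu_d C CARD('d) r))"
proof -
  let ?p = "psi_d C CARD('d) r" and ?L = "box_radius C CARD('d) r"
  have "1 \<le> sqrt ?p" using assms(2) by simp
  moreover have "sqrt ?p \<le> real_of_int ?L" "real_of_int ?L < sqrt ?p + 1"
    unfolding box_radius_def by linarith+
  ultimately have L: "0 \<le> ?L" "real_of_int ?L \<le> 2 * sqrt ?p" by linarith+
  have coord: "\<bar>(x - y) $ k\<bar> \<le> 5 * ?L" for k
  proof -
    have "\<bar>x $ k - 3 * ?L * int i * \<xi> $ k\<bar> \<le> ?L" "\<bar>y $ k - 3 * ?L * int j * \<xi> $ k\<bar> \<le> ?L"
      using assms(4,5) unfolding mem_boxQ_iff by blast+
    moreover have "\<bar>3 * ?L * (int j - int i) * \<xi> $ k\<bar> \<le> 3 * ?L"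
    proof -
      have "\<bar>int j - int i\<bar> * \<bar>\<xi> $ k\<bar> \<le> 1 * 1"
        using assms(3) abs_nth_le_lone[of \<xi> k] assms(1) by (intro mult_mono) auto
      then have "3 * ?L * (\<bar>int j - int i\<bar> * \<bar>\<xi> $ k\<bar>) \<le> 3 * ?L * 1"
        using L by (intro mult_left_mono) auto
      then show ?thesis using L by (simp add: abs_mult mult.assoc)
    qed
    ultimately show ?thesis by (simp add: algebra_simps abs_le_iff)
  qed
  have "(real_of_int ((x - y) $ k))\<^sup>2 \<le> 100 * ?p" for k
  proof -
    have "real_of_int \<bar>(x - y) $ k\<bar> \<le> 5 * real_of_int ?L"
      using coord[of k] by linarith
    then have "\<bar>real_of_int ((x - y) $ k)\<bar> \<le> 10 * sqrt ?p"
      using L by simp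
    then have "\<bar>real_of_int ((x - y) $ k)\<bar>\<^sup>2 \<le> (10 * sqrt ?p)\<^sup>2"
      by (rule power_mono) simp
    then show ?thesis using assms(2) by (simp add: power_mult_distrib)
  qed
  then have "(\<Sum>k\<in>UNIV. (real_of_int ((x - y) $ k))\<^sup>2) \<le> real CARD('d) * (100 * ?p)"
    using sum_mono[of UNIV "\<lambda>k. (real_of_int ((x - y) $ k))\<^sup>2" "\<lambda>_. 100 * ?p"] by simp
  also have "\<dots> \<le> real (nu_d C CARD('d) r)"
  proof -
    have "?p \<le> real (nat \<lceil>?p\<rceil>)" by linarith
    then show ?thesis unfolding nu_d_def by (simp add: mult_left_mono)
  qed
  finally show ?thesis unfolding ltwo_def by (rule real_sqrt_le_mono)
qed

section \<open>Locality of Gamma_i\<close>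

definition Gamma_sites :: "real \<Rightarrow> real \<Rightarrow> int^('d::finite) \<Rightarrow> nat \<Rightarrow> (int^'d) set" where
  "Gamma_sites C r \<xi> i = (\<Union>j\<le>i. boxQ C r \<xi> j)"

definition Gamma_steps :: "real \<Rightarrow> real \<Rightarrow> int^('d::finite) \<Rightarrow> nat \<Rightarrow> ((int^'d) \<times> nat) set" where
  "Gamma_steps C r \<xi> i = (\<Union>j<i. boxQ C r \<xi> j) \<times> {..<nu_d C CARD('d) r}"

lemma finite_Gamma_sites: "finite (Gamma_sites C r \<xi> i)"
  unfolding Gamma_sites_def by (simp add: finite_boxQ)

lemma finite_Gamma_steps: "finite (Gamma_steps C r \<xi> i)"
  unfolding Gamma_steps_def by (simp add: finite_boxQ)

lemma Gamma_sites_disjoint: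
  fixes \<xi> :: "int^'d::finite"
  assumes "lone \<xi> = 1" "0 < psi_d C CARD('d) r"
  shows "Gamma_sites C r \<xi> i \<inter> boxQ C r \<xi> (Suc i) = {}"
proof -
  have "boxQ C r \<xi> j \<inter> boxQ C r \<xi> (Suc i) = {}" if "j \<le> i" for j
    using that by (intro boxQ_disjoint[OF assms]) simp
  then show ?thesis unfolding Gamma_sites_def by blast
qed

lemma Gamma_steps_disjoint:
  fixes \<xi> :: "int^'d::finite"
  assumes "lone \<xi> = 1" "0 < psi_d C CARD('d) r" "A \<subseteq> boxQ C r \<xi> i"
  shows "Gamma_steps C r \<xi> i \<inter> A \<times> {..<n} = {}"
proof -
  have "boxQ C r \<xi> j \<inter> boxQ C r \<xi> i = {}" if "j < i" for j
    using that by (intro boxQ_disjoint[OF assms(1,2)]) simp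
  then show ?thesis unfolding Gamma_steps_def using assms(3) by blast
qed

lemma Gamma_subset_boxQ: "Gamma C r \<xi> w i \<subseteq> boxQ C r \<xi> i"
  by (cases i) auto

lemma walk_cong: "(\<forall>j<k. snd w (x, j) = snd w' (x, j)) \<Longrightarrow> walk w x k = walk w' x k"
  unfolding walk_def by (auto intro!: sum.cong)

lemma range_set_eq_UN_image: "range_set w A n = (\<Union>x\<in>A. walk w x ` {..n})"
  unfolding range_set_def image_Collect atMost_def ..

lemma range_set_cong:
  "\<forall>x\<in>A. \<forall>j<n. snd w (x, j) = snd w' (x, j) \<Longrightarrow> range_set w A n = range_set w' A n"
  unfolding range_set_eq_UN_image by (intro SUP_cong image_cong refl walk_cong) auto

lemma occupied_Int_cong: "(\<forall>x\<in>B. fst w x = fst w' x) \<Longrightarrow> occupied w \<inter> B = occupied w' \<inter> B"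
  unfolding occupied_def by auto

lemma Gamma_cong:
  fixes w w' :: "('d::finite) frog_space"
  assumes "\<forall>x\<in>Gamma_sites C r \<xi> i. fst w x = fst w' x" "\<forall>q\<in>Gamma_steps C r \<xi> i. snd w q = snd w' q"
  shows "Gamma C r \<xi> w i = Gamma C r \<xi> w' i"
  using assms
proof (induction i)
  case 0
  then show ?case using occupied_Int_cong[of "boxQ C r \<xi> 0" w w'] by (auto simp: Gamma_sites_def)
next
  case (Suc i)
  have "Gamma_steps C r \<xi> i \<subseteq> Gamma_steps C r \<xi> (Suc i)"
    unfolding Gamma_steps_def by (intro Sigma_mono) (auto intro: less_SucI)
  then have IH: "Gamma C r \<xi> w i = Gamma C r \<xi> w' i"
    using Suc by (intro Suc.IH) (auto simp: Gamma_sites_def)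
  have "Gamma C r \<xi> w i \<times> {..<nu_d C CARD('d) r} \<subseteq> Gamma_steps C r \<xi> (Suc i)"
    using Gamma_subset_boxQ[of C r \<xi> w i] by (auto simp: Gamma_steps_def)
  then have "range_set w (Gamma C r \<xi> w i) (nu_d C CARD('d) r) = range_set w' (Gamma C r \<xi> w i) (nu_d C CARD('d) r)"
    using Suc.prems(2) by (intro range_set_cong) auto
  moreover have "occupied w \<inter> boxQ C r \<xi> (Suc i) = occupied w' \<inter> boxQ C r \<xi> (Suc i)"
    using Suc.prems(1) by (intro occupied_Int_cong) (auto simp: Gamma_sites_def)
  ultimately show ?case using IH by (auto simp del: Int_iff)
qed

lemma determined_by_Gamma:
  fixes \<xi> :: "int^'d::finite"
  shows "determined_by (Gamma_sites C r \<xi> i) (Gamma_steps C r \<xi> i) {w. P (Gamma C r \<xi> w i)}"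
  unfolding determined_by_def restrict_fields_eq_iff
proof (intro allI impI)
  fix w w' :: "'d frog_space"
  assume "(\<forall>x\<in>Gamma_sites C r \<xi> i. fst w x = fst w' x) \<and> (\<forall>q\<in>Gamma_steps C r \<xi> i. snd w q = snd w' q)"
  then have "Gamma C r \<xi> w i = Gamma C r \<xi> w' i" by (intro Gamma_cong) auto
  then show "w \<in> {w. P (Gamma C r \<xi> w i)} \<longleftrightarrow> w' \<in> {w. P (Gamma C r \<xi> w i)}" by simp
qed

lemma determined_by_range_set:
  "determined_by B (A \<times> {..<n}) {w. P (range_set w A n \<inter> B \<inter> occupied w)}"
proof -
  have "range_set w A n \<inter> B \<inter> occupied w = range_set w' A n \<inter> B \<inter> occupied w'"
    if "restrict_fields B (A \<times> {..<n}) w = restrict_fields B (A \<times> {..<n}) w'" for w w' :: "'a::finite frog_space"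
  proof -
    have "range_set w A n = range_set w' A n"
      using that by (intro range_set_cong) (auto simp: restrict_fields_eq_iff)
    moreover have "occupied w \<inter> B = occupied w' \<inter> B"
      using that by (intro occupied_Int_cong) (auto simp: restrict_fields_eq_iff)
    ultimately show ?thesis by blast
  qed
  then show ?thesis unfolding determined_by_def by (metis (mono_tags) mem_Collect_eq)
qed

lemma sigma_le_imp_Gamma_few:
  fixes \<xi> :: "int^'d::finite"
  assumes "sigma C r \<xi> w = enat i" "real i \<le> N"
  shows "w \<in> (\<Union>j\<le>nat \<lfloor>N\<rfloor>. {w. real (card (Gamma C r \<xi> w j)) < gamma_threshold C CARD('d) r})"
proof -
  let ?P = "\<lambda>i. real (card (Gamma C r \<xi> w i)) < 2 * real CARD('d) / C * \<bar>ln r\<bar>"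
  have "\<exists>i. ?P i" and "i = (LEAST i. ?P i)"
    using assms(1) unfolding sigma_def Let_def by (auto split: if_splits)
  then have "?P i" by (auto intro: LeastI_ex)
  moreover have "i \<le> nat \<lfloor>N\<rfloor>" using assms(2) by (simp add: le_nat_floor)
  ultimately show ?thesis unfolding gamma_threshold_def by auto
qed

lemma Gamma_Suc_few_subset:
  fixes \<xi> :: "int^'d::finite"
  shows "{w. real (card (Gamma C r \<xi> w (Suc i))) < T} - {w. real (card (Gamma C r \<xi> w i)) < T} \<subseteq>
    (\<Union>A\<in>{A. A \<subseteq> boxQ C r \<xi> i \<and> T \<le> real (card A)}.
       {w. Gamma C r \<xi> w i = A} \<inter> {w. real (card (range_set w A (nu_d C CARD('d) r) \<inter> boxQ C r \<xi> (Suc i) \<inter> occupied w)) < T})"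
  using Gamma_subset_boxQ by fastforce

section \<open>Probabilistic estimates\<close>

lemma prob_space_frogP: "prob_space (frogP r :: ('d::finite) frog_space measure)"
  unfolding frogP_def by (rule prob_space_pmf_fields)

lemma space_frogP [simp]: "space (frogP r) = UNIV"
  unfolding frogP_def by (rule space_pmf_fields)

lemma sets_frogP_determined_by:
  fixes X :: "('d::finite) frog_space set"
  shows "finite S \<Longrightarrow> finite P \<Longrightarrow> determined_by S P X \<Longrightarrow> X \<in> sets (frogP r)"
  unfolding frogP_def by (rule sets_determined_by)

lemma measure_frogP_Int_determined_by:
  fixes X Y :: "('d::finite) frog_space set"
  assumes "finite S1" "finite P1" "finite S2" "finite P2" "S1 \<inter> S2 = {}" "P1 \<inter> P2 = {}"
    and "determined_by S1 P1 X" "determined_by S2 P2 Y"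
  shows "measure (frogP r) (X \<inter> Y) = measure (frogP r) X * measure (frogP r) Y"
  unfolding frogP_def using assms by (rule measure_Int_determined_by)

lemma frog_const_measure_le:
  fixes A B :: "(int^'d::finite) set"
  assumes "frog_const TYPE('d) C" "0 < r" "r \<le> 1" "2 \<le> n" "finite A" "finite B"
    and "\<forall>x\<in>A. \<forall>y\<in>B. ltwo (x - y) \<le> sqrt (real n)"
    and "delta0 CARD('d) * real n powr (real CARD('d) / 2) \<le> real (card B)"
  shows "measure (frogP r :: 'd frog_space measure)
      {w. real (card (range_set w A n \<inter> B \<inter> occupied w)) <
          r / 2 * frog_mean C CARD('d) (real n) (real (card A)) (real (card B))}
    \<le> exp (- C * real (card A)) + exp (- (r / 8) * frog_mean C CARD('d) (real n) (real (card A)) (real (card B)))"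
  using assms unfolding frog_const_def frog_mean_def Let_def by simp

lemma measure_UN_atMost_le:
  assumes "finite_measure M" "\<And>i. E i \<in> sets M"
    and "measure M (E 0) \<le> b" "\<And>i. measure M (E (Suc i) - E i) \<le> b"
  shows "measure M (\<Union>i\<le>K. E i) \<le> real (Suc K) * b"
proof (induction K)
  case 0
  then show ?case using assms(3) by simp
next
  case (Suc K)
  interpret finite_measure M by (rule assms(1))
  have "(\<Union>i\<le>Suc K. E i) \<subseteq> (\<Union>i\<le>K. E i) \<union> (E (Suc K) - E K)"
    by (auto simp: atMost_Suc)
  then have "measure M (\<Union>i\<le>Suc K. E i) \<le> measure M ((\<Union>i\<le>K. E i) \<union> (E (Suc K) - E K))"
    using assms(2) by (intro finite_measure_mono) auto
  also have "\<dots> \<le> measure M (\<Union>i\<le>K. E i) + measure M (E (Suc K) - E K)"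
    using assms(2) by (intro measure_Un_le) auto
  also have "\<dots> \<le> real (Suc K) * b + b"
    using Suc.IH assms(4) by (rule add_mono)
  finally show ?case by (simp add: algebra_simps)
qed

locale frog_estimates = small_density C r "CARD('d::finite)" for C r +
  fixes \<xi> :: "int^'d"
  assumes frog_const: "frog_const TYPE('d) C" and lone_\<xi>: "lone \<xi> = 1"
begin

lemma prob_range_set_boxQ_le:
  assumes A: "A \<subseteq> boxQ C r \<xi> i" and j: "j = i \<or> j = Suc i"
  shows "measure (frogP r :: 'd frog_space measure)
      {w. real (card (range_set w A (nu_d C CARD('d) r) \<inter> boxQ C r \<xi> j \<inter> occupied w)) <
          r / 2 * frog_mean C CARD('d) (real (nu_d C CARD('d) r)) (real (card A)) (box_size C CARD('d) r)}
    \<le> exp (- C * real (card A)) +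
      exp (- (r / 8) * frog_mean C CARD('d) (real (nu_d C CARD('d) r)) (real (card A)) (box_size C CARD('d) r))"
proof -
  let ?n = "nu_d C CARD('d) r"
  have "measure (frogP r :: 'd frog_space measure)
      {w. real (card (range_set w A ?n \<inter> boxQ C r \<xi> j \<inter> occupied w)) <
          r / 2 * frog_mean C CARD('d) (real ?n) (real (card A)) (real (card (boxQ C r \<xi> j)))}
    \<le> exp (- C * real (card A)) +
      exp (- (r / 8) * frog_mean C CARD('d) (real ?n) (real (card A)) (real (card (boxQ C r \<xi> j))))"
  proof (rule frog_const_measure_le[OF frog_const r(1)])
    show "r \<le> 1" "2 \<le> ?n" using r_lt_1 nu_ge_200 by auto
    show "finite A" "finite (boxQ C r \<xi> j)" using finite_subset[OF A finite_boxQ] finite_boxQ by auto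
    show "\<forall>x\<in>A. \<forall>y\<in>boxQ C r \<xi> j. ltwo (x - y) \<le> sqrt (real ?n)"
      using boxQ_dist[OF lone_\<xi> psi_ge_1 j] A by blast
    show "delta0 CARD('d) * real ?n powr (real CARD('d) / 2) \<le> real (card (boxQ C r \<xi> j))"
      using density_le_box_size by (simp add: card_boxQ)
  qed
  then show ?thesis by (simp only: card_boxQ)
qed

lemma prob_range_set_few:
  assumes A: "A \<subseteq> boxQ C r \<xi> i" "gamma_threshold C CARD('d) r \<le> real (card A)" and j: "j = i \<or> j = Suc i"
  shows "measure (frogP r :: 'd frog_space measure)
      {w. real (card (range_set w A (nu_d C CARD('d) r) \<inter> boxQ C r \<xi> j \<inter> occupied w)) < gamma_threshold C CARD('d) r}
    \<le> step_failure_bound C CARD('d) r"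
proof -
  let ?T = "gamma_threshold C CARD('d) r" and ?n = "nu_d C CARD('d) r"
  let ?m = "\<lambda>a. frog_mean C CARD('d) (real ?n) a (box_size C CARD('d) r)"
  let ?F = "\<lambda>w. range_set w A ?n \<inter> boxQ C r \<xi> j \<inter> occupied w"
  have mono: "?m ?T \<le> ?m (real (card A))" using A(2) by (rule frog_mean_mono)
  have "?T \<le> r / 2 * ?m ?T" by (rule gamma_threshold_le_half_r_frog_mean)
  also have "\<dots> \<le> r / 2 * ?m (real (card A))" using mono r by (intro mult_left_mono) auto
  finally have "{w. real (card (?F w)) < ?T} \<subseteq> {w. real (card (?F w)) < r / 2 * ?m (real (card A))}"
    by auto
  moreover have "{w. real (card (?F w)) < r / 2 * ?m (real (card A))} \<in> sets (frogP r)"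
    using finite_subset[OF A(1) finite_boxQ]
    by (intro sets_frogP_determined_by[OF finite_boxQ _ determined_by_range_set]) auto
  ultimately have "measure (frogP r) {w. real (card (?F w)) < ?T} \<le>
      measure (frogP r) {w. real (card (?F w)) < r / 2 * ?m (real (card A))}"
    using prob_space_frogP by (intro finite_measure.finite_measure_mono prob_space.finite_measure) auto
  also have "\<dots> \<le> exp (- C * real (card A)) + exp (- (r / 8) * ?m (real (card A)))"
    using A(1) j by (rule prob_range_set_boxQ_le)
  also have "\<dots> \<le> step_failure_bound C CARD('d) r"
    unfolding step_failure_bound_def using A(2) mono C r by (intro add_mono) auto
  finally show ?thesis .
qed

lemma sets_Gamma:
  "{w. P (Gamma C r \<xi> w i)} \<in> sets (frogP r :: 'd frog_space measure)"
  by (rule sets_frogP_determined_by[OF finite_Gamma_sites finite_Gamma_steps determined_by_Gamma])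

lemma prob_Gamma_0_few:
  "measure (frogP r :: 'd frog_space measure) {w. real (card (Gamma C r \<xi> w 0)) < gamma_threshold C CARD('d) r}
    \<le> step_failure_bound C CARD('d) r"
proof -
  let ?T = "gamma_threshold C CARD('d) r" and ?Q0 = "boxQ C r \<xi> 0"
  let ?G = "{w :: 'd frog_space. real (card (range_set w ?Q0 (nu_d C CARD('d) r) \<inter> ?Q0 \<inter> occupied w)) < ?T}"
  have "card (range_set w ?Q0 (nu_d C CARD('d) r) \<inter> ?Q0 \<inter> occupied w) \<le> card (Gamma C r \<xi> w 0)" for w
    by (rule card_mono) (auto simp: finite_boxQ)
  then have "{w. real (card (Gamma C r \<xi> w 0)) < ?T} \<subseteq> ?G"
    by (auto intro: le_less_trans[rotated])
  moreover have "?G \<in> sets (frogP r)"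
    by (intro sets_frogP_determined_by[OF finite_boxQ _ determined_by_range_set]) (simp add: finite_boxQ)
  ultimately have "measure (frogP r) {w. real (card (Gamma C r \<xi> w 0)) < ?T} \<le> measure (frogP r) ?G"
    using prob_space_frogP by (intro finite_measure.finite_measure_mono prob_space.finite_measure) auto
  also have "\<dots> \<le> step_failure_bound C CARD('d) r"
    using gamma_threshold_le_box_size by (intro prob_range_set_few) (auto simp: card_boxQ)
  finally show ?thesis .
qed

lemma prob_Gamma_Int_range_set:
  assumes "A \<subseteq> boxQ C r \<xi> i"
  shows "measure (frogP r :: 'd frog_space measure)
      ({w. P (Gamma C r \<xi> w i)} \<inter> {w. Q (range_set w A n \<inter> boxQ C r \<xi> (Suc i) \<inter> occupied w)}) =
    measure (frogP r) {w. P (Gamma C r \<xi> w i)} *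
    measure (frogP r) {w. Q (range_set w A n \<inter> boxQ C r \<xi> (Suc i) \<inter> occupied w)}"
proof (rule measure_frogP_Int_determined_by[OF finite_Gamma_sites finite_Gamma_steps finite_boxQ])
  show "finite (A \<times> {..<n})" using finite_subset[OF assms finite_boxQ] by simp
  show "Gamma_sites C r \<xi> i \<inter> boxQ C r \<xi> (Suc i) = {}"
    using Gamma_sites_disjoint[OF lone_\<xi>] psi_ge_1 by simp
  show "Gamma_steps C r \<xi> i \<inter> A \<times> {..<n} = {}"
    using Gamma_steps_disjoint[OF lone_\<xi> _ assms] psi_ge_1 by simp
qed (rule determined_by_Gamma determined_by_range_set)+

lemma prob_Gamma_Suc_few:
  "measure (frogP r :: 'd frog_space measure)
      ({w. real (card (Gamma C r \<xi> w (Suc i))) < gamma_threshold C CARD('d) r} -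
       {w. real (card (Gamma C r \<xi> w i)) < gamma_threshold C CARD('d) r})
    \<le> step_failure_bound C CARD('d) r"
proof -
  let ?M = "frogP r :: 'd frog_space measure" and ?T = "gamma_threshold C CARD('d) r"
    and ?\<beta> = "step_failure_bound C CARD('d) r"
  let ?AA = "{A. A \<subseteq> boxQ C r \<xi> i \<and> ?T \<le> real (card A)}"
  let ?H = "\<lambda>A. {w. Gamma C r \<xi> w i = A}"
  let ?G = "\<lambda>A. {w. real (card (range_set w A (nu_d C CARD('d) r) \<inter> boxQ C r \<xi> (Suc i) \<inter> occupied w)) < ?T}"
  interpret prob_space ?M by (rule prob_space_frogP)
  have finAA: "finite ?AA"
    by (rule finite_subset[of _ "Pow (boxQ C r \<xi> i)"]) (auto simp: finite_boxQ)
  have sets_G: "?G A \<in> sets ?M" if "A \<in> ?AA" for A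
  proof -
    have "finite A" using that finite_subset[OF _ finite_boxQ] by blast
    then show ?thesis by (intro sets_frogP_determined_by[OF finite_boxQ _ determined_by_range_set]) auto
  qed
  have "measure ?M ({w. real (card (Gamma C r \<xi> w (Suc i))) < ?T} - {w. real (card (Gamma C r \<xi> w i)) < ?T})
      \<le> measure ?M (\<Union>A\<in>?AA. ?H A \<inter> ?G A)"
    by (rule finite_measure_mono[OF Gamma_Suc_few_subset]) (use finAA sets_G sets_Gamma in auto)
  also have "\<dots> \<le> (\<Sum>A\<in>?AA. measure ?M (?H A \<inter> ?G A))"
    using finAA sets_G sets_Gamma by (intro measure_UNION_le) auto
  also have "\<dots> = (\<Sum>A\<in>?AA. measure ?M (?H A) * measure ?M (?G A))"
    by (intro sum.cong refl prob_Gamma_Int_range_set) simp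
  also have "\<dots> \<le> (\<Sum>A\<in>?AA. measure ?M (?H A) * ?\<beta>)"
    by (intro sum_mono mult_left_mono prob_range_set_few) auto
  also have "\<dots> = measure ?M (\<Union>A\<in>?AA. ?H A) * ?\<beta>"
  proof -
    have "measure ?M (\<Union>A\<in>?AA. ?H A) = (\<Sum>A\<in>?AA. measure ?M (?H A))"
      using finAA sets_Gamma by (intro measure_finite_Union) (auto simp: disjoint_family_on_def)
    then show ?thesis by (simp add: sum_distrib_right)
  qed
  also have "\<dots> \<le> ?\<beta>"
    using prob_le_1 by (intro mult_left_le_one_le) (auto simp: step_failure_bound_def)
  finally show ?thesis .
qed

lemma prob_Gamma_few_upto:
  "measure (frogP r :: 'd frog_space measure) (\<Union>i\<le>K. {w. real (card (Gamma C r \<xi> w i)) < gamma_threshold C CARD('d) r})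
    \<le> real (Suc K) * step_failure_bound C CARD('d) r"
  using prob_space_frogP prob_Gamma_0_few prob_Gamma_Suc_few sets_Gamma
  by (intro measure_UN_atMost_le prob_space.finite_measure) auto

lemma prob_sigma_small_le:
  "measure (frogP r :: 'd frog_space measure)
      {w \<in> space (frogP r). \<exists>i::nat. sigma C r \<xi> w = enat i \<and>
         real i \<le> r powr (- real CARD('d) / 2) * psi_d C CARD('d) r powr (- 1 / 2)}
    \<le> 4 * sqrt r"
proof -
  let ?N = "r powr (- real CARD('d) / 2) * psi_d C CARD('d) r powr (- 1 / 2)"
  let ?E = "\<lambda>j. {w :: 'd frog_space. real (card (Gamma C r \<xi> w j)) < gamma_threshold C CARD('d) r}"
  interpret prob_space "frogP r :: 'd frog_space measure" by (rule prob_space_frogP)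
  have "{w \<in> space (frogP r). \<exists>i::nat. sigma C r \<xi> w = enat i \<and> real i \<le> ?N} \<subseteq> (\<Union>j\<le>nat \<lfloor>?N\<rfloor>. ?E j)"
    using sigma_le_imp_Gamma_few by blast
  then have "measure (frogP r) {w \<in> space (frogP r). \<exists>i::nat. sigma C r \<xi> w = enat i \<and> real i \<le> ?N}
      \<le> measure (frogP r) (\<Union>j\<le>nat \<lfloor>?N\<rfloor>. ?E j)"
    using sets_Gamma by (intro finite_measure_mono) auto
  also have "\<dots> \<le> real (Suc (nat \<lfloor>?N\<rfloor>)) * step_failure_bound C CARD('d) r"
    by (rule prob_Gamma_few_upto)
  also have "\<dots> \<le> 4 * sqrt r"
    by (rule steps_times_step_failure_bound_le)
  finally show ?thesis .
qed

end

theorem lemma3p9: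
  fixes C :: real and \<xi> :: "int^'d::finite"
  assumes "CARD('d) \<ge> 2"
    and "frog_const TYPE('d) C"
    and "lone \<xi> = 1"
  shows "((\<lambda>r. measure (frogP r :: 'd frog_space measure)
            {w \<in> space (frogP r). \<exists>i::nat. sigma C r \<xi> w = enat i \<and>
               real i \<le> r powr (- real CARD('d) / 2) * psi_d C CARD('d) r powr (- 1 / 2)})
          \<longlongrightarrow> 0) (at_right 0)"
proof (rule tendsto_sandwich[of "\<lambda>_. 0" _ _ "\<lambda>r. 4 * sqrt r"])
  have C: "0 < C" "C < 1" using assms(2) by (auto simp: frog_const_def)
  then have "eventually (\<lambda>r. 0 < r \<and> r \<le> C / 1600) (at_right (0::real))"
    unfolding eventually_at_right_field by (intro exI[of _ "C / 1600"]) auto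
  then show "eventually (\<lambda>r. measure (frogP r :: 'd frog_space measure)
            {w \<in> space (frogP r). \<exists>i::nat. sigma C r \<xi> w = enat i \<and>
               real i \<le> r powr (- real CARD('d) / 2) * psi_d C CARD('d) r powr (- 1 / 2)}
          \<le> 4 * sqrt r) (at_right 0)"
  proof eventually_elim
    case (elim r)
    interpret frog_estimates C r \<xi>
      using assms C elim by unfold_locales auto
    show ?case by (rule prob_sigma_small_le)
  qed
  have "((\<lambda>r. 4 * sqrt r) \<longlongrightarrow> 4 * sqrt 0) (at_right (0::real))"
    by (intro tendsto_intros)
  then show "((\<lambda>r. 4 * sqrt r) \<longlongrightarrow> 0) (at_right (0::real))" by simp
qed simp_all

end
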